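(* Let $X$ be a Borel space, $\Theta$ a real Hilbert space, $D\subset\Theta$ open, $\mu$ a Borel probability measure on $X$, and $N:X\times\Theta\to\mathbb{R}^l$ such that $N(x,\theta)$ is measurable in $x$ and Fréchet differentiable in $\theta$ for all $(x,\theta)$, and $\int\|N(x,\theta)\|^2\,d\mu(x)<\infty$ for all $\theta\in\Theta$. Suppose there exist $\hat K_N,\hat L_N\in L^2(\mu)$ such that for $\mu$-almost every $x\in X$, $N(x,\cdot):\Theta\to\mathbb{R}^l$ satisfies $\|\partial_\theta N(x,\theta)\|\le\hat K_N(x)$ and $\|\partial_\theta N(x,\theta_1)-\partial_\theta N(x,\theta_2)\|\le\hat L_N(x)\|\theta_1-\theta_2\|$ for all $\theta,\theta_1,\theta_2\in D$. Then $N_\mu:\Theta\to L^2(\mu,\mathbb{R}^l)$ is Fréchet differentiable on $D$; for all $\theta\in D$ the Jacobian satisfies $\partial N_\mu(\theta)\eta=\partial_\theta N(\cdot,\theta)\eta$ for all $\eta\in\Theta$, and its adjoint satisfies \[ \partial N_\mu(\theta)^*f=\int\partial_\theta N(x,\theta)^*f(x)\,d\mu(x)\quad\text{for all }f\in L^2(\mu,\mathbb{R}^l); \] and $N_\mu$ is $\|\hat K_N\|_{L^2(\mu)}$-BJ and $\|\hat L_N\|_{L^2(\mu)}$-LJ on $D$. Furthermore, if there exists $\lambda_N>0$ such that \[ \int\bigl\langle\partial_\theta N(x_1,\theta)^*f(x_1),\partial_\theta N(x_2,\theta)^*f(x_2)\bigr\rangle\,d(\mu\otimes\mu)(x_1,x_2)\ge\lambda_N\|f\|^2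 \] for all $\theta\in D$ and $f\in L^2(\mu,\mathbb{R}^l)$, then $N_\mu$ is $\lambda_N$-UC on $D$.
   Context: $L^2(\mu,\mathbb{R}^l)$ is the Hilbert space of $\mu$-equivalence classes of square-integrable $\mathbb{R}^l$-valued functions with norm $\|f\|=(\int\|f(x)\|^2d\mu(x))^{1/2}$. The induced map $N_\mu:\Theta\to L^2(\mu,\mathbb{R}^l)$ sends $\theta$ to the equivalence class of $N(\cdot,\theta)$. $\partial_\theta N(x,\theta)\in\mathcal{L}(\Theta,\mathbb{R}^l)$ is the Fréchet derivative of $N(x,\cdot)$ at $\theta$, $\partial_\theta N(x,\theta)^*$ its adjoint. For a map $F:\Theta\to H$ between Hilbert spaces differentiable on $D$, with Fréchet derivative $\partial F$: $F$ is $K$-BJ on $D$ if $\|\partial F(\theta)\|\le K$ for $\theta\in D$; $L$-LJ on $D$ if $\|\partial F(\theta_1)-\partial F(\theta_2)\|\le L\|\theta_1-\theta_2\|$ for $\theta_1,\theta_2\in D$; $\lambda$-UC on $D$ ($\lambda>0$) if $\langle y,\partial F(\theta)\partial F(\theta)^*y\rangle\ge\lambda\|y\|^2$ for all $y\in H$, $\theta\in D$. *)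

theory Defs
  imports "HOL-Probability.Probability"
begin

text \<open>Square-integrable (Borel measurable) functions: representatives of elements of L^2(M, V).\<close>
definition sq_int :: "'a measure \<Rightarrow> ('a \<Rightarrow> 'c::real_normed_vector) \<Rightarrow> bool" where
  "sq_int M f \<longleftrightarrow> f \<in> borel_measurable M \<and> integrable M (\<lambda>x. (norm (f x))\<^sup>2)"

definition L2norm :: "'a measure \<Rightarrow> ('a \<Rightarrow> 'c::real_normed_vector) \<Rightarrow> real" where
  "L2norm M f = sqrt (\<integral>x. (norm (f x))\<^sup>2 \<partial>M)"

text \<open>Adjoint of the operator  eta |-> (x |-> A x eta)  from Theta to L^2(M, R^l):
  the unique g in Theta with  g . eta = <f, A eta>_{L^2}  for all eta.\<close>
definition L2_adjoint :: "'a measure \<Rightarrow> ('a \<Rightarrow> 'b::real_inner \<Rightarrow> 'c::real_inner) \<Rightarrow> ('a \<Rightarrow> 'c) \<Rightarrow> 'b" where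
  "L2_adjoint M A f = (THE g. \<forall>\<eta>. g \<bullet> \<eta> = (\<integral>x. f x \<bullet> A x \<eta> \<partial>M))"

end

theory Submission
  imports Defs
begin

text \<open>
  Pointwise in x, the operator-norm bounds give |dN(x,theta) eta| <= K(x) |eta| and
  |(dN(x,theta1) - dN(x,theta2)) eta| <= L(x) |theta1 - theta2| |eta|, and the mean value
  inequality on the segment from theta to theta + h (inside D) bounds the Taylor remainder of
  N(x,.) by L(x) |h|^2. Squaring and integrating yields the BJ and LJ constants and an L^2
  remainder of order |h|^2, i.e. Frechet differentiability. For f in L^2 the functional
  eta |-> int f(x) . dN(x,theta) eta dmu is bounded by |eta| int |f| K dmu, so the Riesz
  representation theorem (via the point of minimal norm on the hyperplane where the functional
  is 1) produces dN_mu(theta)^* f. Finally, by Fubini the double integral in the UC hypothesis is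
  |dN_mu(theta)^* f|^2 = <f, dN_mu(theta) dN_mu(theta)^* f>.
\<close>

lemma orthogonal_if_norm_minimal:
  fixes g k :: "'a::real_inner"
  assumes min: "\<And>t::real. norm g \<le> norm (g + t *\<^sub>R k)"
  shows "g \<bullet> k = 0"
proof (rule ccontr)
  assume gk: "g \<bullet> k \<noteq> 0"
  then have "k \<noteq> 0" by auto
  define t where "t = - (g \<bullet> k) / (k \<bullet> k)"
  have "(norm (g + t *\<^sub>R k))\<^sup>2 = (norm g)\<^sup>2 + 2 * t * (g \<bullet> k) + t\<^sup>2 * (k \<bullet> k)"
    unfolding power2_norm_eq_inner
    by (simp add: inner_add_right inner_commute power2_eq_square algebra_simps)
  also have "\<dots> = (norm g)\<^sup>2 - (g \<bullet> k)\<^sup>2 / (k \<bullet> k)"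
    using \<open>k \<noteq> 0\<close> by (simp add: t_def power2_eq_square field_simps)
  also have "\<dots> < (norm g)\<^sup>2"
    using gk \<open>k \<noteq> 0\<close> by simp
  finally have "norm (g + t *\<^sub>R k) < norm g"
    by (rule power_less_imp_less_base) simp
  with min show False
    by (meson not_le)
qed

lemma Cauchy_minimizing_sequence:
  fixes x :: "nat \<Rightarrow> 'a::real_inner"
  assumes "convex C" and xC: "\<And>n. x n \<in> C"
    and d_le: "\<And>y. y \<in> C \<Longrightarrow> d \<le> (norm y)\<^sup>2"
    and x_lt: "\<And>n. (norm (x n))\<^sup>2 < d + 1 / Suc n"
  shows "Cauchy x"
proof (rule metric_CauchyI)
  have dist_x: "dist (x m) (x n) \<le> sqrt (2 / Suc m) + sqrt (2 / Suc n)" for m n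
  proof -
    have "(1/2) *\<^sub>R x m + (1/2) *\<^sub>R x n \<in> C"
      using \<open>convex C\<close> xC by (intro convexD) auto
    then have "d \<le> (norm ((x m + x n) /\<^sub>R 2))\<^sup>2"
      by (intro d_le) (simp add: scaleR_add_right)
    then have "4 * d \<le> (norm (x m + x n))\<^sup>2"
      by (simp add: power_divide)
    moreover have "(norm (x m - x n))\<^sup>2 + (norm (x m + x n))\<^sup>2 = 2 * (norm (x m))\<^sup>2 + 2 * (norm (x n))\<^sup>2"
      by (simp add: power2_norm_eq_inner inner_diff_left inner_diff_right inner_add_left
          inner_add_right inner_commute algebra_simps)
    ultimately have "(dist (x m) (x n))\<^sup>2 \<le> 2 / Suc m + 2 / Suc n"
      using x_lt[of m] x_lt[of n] by (simp add: dist_norm)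
    then have "dist (x m) (x n) \<le> sqrt (2 / Suc m + 2 / Suc n)"
      by (simp add: real_le_rsqrt)
    then show ?thesis
      using sqrt_add_le_add_sqrt[of "2 / Suc m" "2 / Suc n"] by simp
  qed
  have "(\<lambda>n. 2 / real (Suc n)) \<longlonglongrightarrow> 0"
    by (rule LIMSEQ_Suc[OF lim_const_over_n])
  then have "(\<lambda>n. sqrt (2 / Suc n)) \<longlonglongrightarrow> 0"
    using tendsto_real_sqrt by fastforce
  fix e :: real assume "e > 0"
  then obtain M where M: "\<And>n. n \<ge> M \<Longrightarrow> sqrt (2 / Suc n) < e / 2"
    using LIMSEQ_D[OF \<open>(\<lambda>n. sqrt (2 / Suc n)) \<longlonglongrightarrow> 0\<close>, of "e / 2"] by auto
  show "\<exists>M. \<forall>m\<ge>M. \<forall>n\<ge>M. dist (x m) (x n) < e"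
  proof (intro exI allI impI)
    fix m n assume "M \<le> m" "M \<le> n"
    then show "dist (x m) (x n) < e"
      using dist_x[of m n] M[of m] M[of n] by linarith
  qed
qed

lemma hilbert_min_norm_exists:
  fixes C :: "'a::{real_inner,complete_space} set"
  assumes "closed C" "convex C" "C \<noteq> {}"
  shows "\<exists>g\<in>C. \<forall>y\<in>C. norm g \<le> norm y"
proof -
  define d where "d = Inf ((\<lambda>y. (norm y)\<^sup>2) ` C)"
  have d_le: "d \<le> (norm y)\<^sup>2" if "y \<in> C" for y
    unfolding d_def using that by (auto intro!: cInf_lower bdd_belowI[of _ 0])
  have "\<exists>y\<in>C. (norm y)\<^sup>2 < d + 1 / Suc n" for n
    using cInf_lessD[of "(\<lambda>y. (norm y)\<^sup>2) ` C" "d + 1 / Suc n"] \<open>C \<noteq> {}\<close>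
    by (auto simp: d_def)
  then obtain x where xC: "\<And>n. x n \<in> C" and x_lt: "\<And>n. (norm (x n))\<^sup>2 < d + 1 / Suc n"
    by metis
  have "Cauchy x"
    using \<open>convex C\<close> xC d_le x_lt by (rule Cauchy_minimizing_sequence)
  then obtain g where lim: "x \<longlonglongrightarrow> g"
    by (auto simp: Cauchy_convergent_iff convergent_def)
  have "g \<in> C"
    using \<open>closed C\<close> xC lim by (auto simp: closed_sequential_limits)
  have "(norm g)\<^sup>2 \<le> d"
  proof (rule tendsto_le[OF trivial_limit_sequentially])
    show "(\<lambda>n. (norm (x n))\<^sup>2) \<longlonglongrightarrow> (norm g)\<^sup>2"
      using lim by (intro tendsto_intros)
    show "(\<lambda>n. d + 1 / Suc n) \<longlonglongrightarrow> d"
      using tendsto_add[OF tendsto_const LIMSEQ_Suc[OF lim_const_over_n[of 1]], of d] by simp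
    show "\<forall>\<^sub>F n in sequentially. (norm (x n))\<^sup>2 \<le> d + 1 / Suc n"
      using x_lt by (simp add: less_imp_le)
  qed
  then show ?thesis
    using \<open>g \<in> C\<close> d_le by (meson norm_ge_zero order_trans power2_le_imp_le)
qed

lemma riesz_representation:
  fixes \<phi> :: "'a::{real_inner,complete_space} \<Rightarrow> real"
  assumes "bounded_linear \<phi>"
  shows "\<exists>g. \<forall>\<eta>. \<phi> \<eta> = g \<bullet> \<eta>"
proof (cases "\<forall>\<eta>. \<phi> \<eta> = 0")
  case True
  then show ?thesis by auto
next
  case False
  interpret \<phi>: bounded_linear \<phi> by fact
  from False obtain u where "\<phi> u \<noteq> 0" by auto
  then have "\<phi> (u /\<^sub>R \<phi> u) = 1" by (simp add: \<phi>.scaleR)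
  moreover have "closed (\<phi> -` {1})"
    by (intro continuous_closed_vimage linear_continuous_at assms) simp
  moreover have "convex (\<phi> -` {1})"
    by (intro convex_linear_vimage \<phi>.linear) simp
  ultimately obtain g where g1: "\<phi> g = 1" and min: "\<And>y. \<phi> y = 1 \<Longrightarrow> norm g \<le> norm y"
    using hilbert_min_norm_exists[of "\<phi> -` {1}"] by blast
  have orth: "g \<bullet> k = 0" if "\<phi> k = 0" for k
    by (rule orthogonal_if_norm_minimal) (use min that g1 in \<open>simp add: \<phi>.add \<phi>.scaleR\<close>)
  have "g \<noteq> 0" using g1 by auto
  show ?thesis
  proof (intro exI allI)
    fix \<eta>
    have "g \<bullet> (\<eta> - \<phi> \<eta> *\<^sub>R g) = 0"
      by (rule orth) (simp add: g1 \<phi>.diff \<phi>.scaleR)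
    then show "\<phi> \<eta> = (g /\<^sub>R (g \<bullet> g)) \<bullet> \<eta>"
      using \<open>g \<noteq> 0\<close> by (simp add: inner_diff_right field_simps)
  qed
qed

text \<open>The library's \<open>adjoint_works\<close> needs a Euclidean domain; in a Hilbert space the
  choice in \<^const>\<open>adjoint\<close> is justified by the Riesz representation.\<close>

lemma adjoint_works_hilbert:
  fixes A :: "'a::{real_inner,complete_space} \<Rightarrow> 'b::real_inner"
  assumes "bounded_linear A"
  shows "x \<bullet> adjoint A y = A x \<bullet> y"
proof -
  have "\<exists>g. \<forall>x. A x \<bullet> y = g \<bullet> x" for y
    by (rule riesz_representation) (rule bounded_linear_compose[OF bounded_linear_inner_left assms])
  then have "\<exists>A'. \<forall>x y. A x \<bullet> y = x \<bullet> A' y"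
    by (metis inner_commute)
  then have "\<forall>x y. A x \<bullet> y = x \<bullet> adjoint A y"
    unfolding adjoint_def by (rule someI_ex)
  then show ?thesis by simp
qed

lemma L2norm_nonneg: "0 \<le> L2norm M f"
  by (simp add: L2norm_def)

lemma integrable_inner_sq_int:
  fixes f g :: "'a \<Rightarrow> 'c::{real_inner,second_countable_topology}"
  assumes "sq_int M f" "sq_int M g"
  shows "integrable M (\<lambda>x. f x \<bullet> g x)"
proof (rule Bochner_Integration.integrable_bound)
  show "integrable M (\<lambda>x. (norm (f x))\<^sup>2 + (norm (g x))\<^sup>2)"
    using assms by (auto simp: sq_int_def)
  show "(\<lambda>x. f x \<bullet> g x) \<in> borel_measurable M"
    using assms by (auto simp: sq_int_def)
  have "\<bar>u \<bullet> v\<bar> \<le> (norm u)\<^sup>2 + (norm v)\<^sup>2" for u v :: 'c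
    using Cauchy_Schwarz_ineq2[of u v] sum_squares_bound[of "norm u" "norm v"] by simp
  then show "AE x in M. norm (f x \<bullet> g x) \<le> norm ((norm (f x))\<^sup>2 + (norm (g x))\<^sup>2)"
    by simp
qed

lemma sq_int_dominated:
  fixes g :: "'a \<Rightarrow> 'c::real_normed_vector" and k :: "'a \<Rightarrow> real"
  assumes g: "g \<in> borel_measurable M" and k: "sq_int M k"
    and dom: "AE x in M. norm (g x) \<le> k x * c"
  shows "sq_int M g" and "L2norm M g \<le> L2norm M k * \<bar>c\<bar>"
proof -
  have k2: "integrable M (\<lambda>x. (k x)\<^sup>2 * c\<^sup>2)"
    using k by (simp add: sq_int_def)
  have dom2: "AE x in M. (norm (g x))\<^sup>2 \<le> (k x)\<^sup>2 * c\<^sup>2"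
    using dom
  proof eventually_elim
    case (elim x)
    then have "(norm (g x))\<^sup>2 \<le> (k x * c)\<^sup>2"
      by (intro power_mono) auto
    then show ?case by (simp add: power_mult_distrib)
  qed
  have g2: "integrable M (\<lambda>x. (norm (g x))\<^sup>2)"
    by (rule Bochner_Integration.integrable_bound[OF k2]) (use g dom2 in auto)
  then show "sq_int M g"
    using g by (simp add: sq_int_def)
  have "(\<integral>x. (norm (g x))\<^sup>2 \<partial>M) \<le> (\<integral>x. (k x)\<^sup>2 \<partial>M) * c\<^sup>2"
    using integral_mono_AE[OF g2 k2 dom2] by simp
  then have "L2norm M g \<le> sqrt ((\<integral>x. (k x)\<^sup>2 \<partial>M) * c\<^sup>2)"
    unfolding L2norm_def by (rule real_sqrt_le_mono)
  then show "L2norm M g \<le> L2norm M k * \<bar>c\<bar>"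
    by (simp add: L2norm_def real_sqrt_mult)
qed

lemma has_derivative_difference_quotient_LIMSEQ:
  fixes f :: "'a::real_normed_vector \<Rightarrow> 'b::real_normed_vector"
  assumes deriv: "(f has_derivative f') (at x)"
  shows "(\<lambda>n. real (Suc n) *\<^sub>R (f (x + \<eta> /\<^sub>R real (Suc n)) - f x)) \<longlonglongrightarrow> f' \<eta>"
proof (cases "\<eta> = 0")
  case True
  then show ?thesis
    using linear_0[OF has_derivative_linear[OF deriv]] by simp
next
  case False
  interpret f': bounded_linear f' using deriv by (rule has_derivative_bounded_linear)
  define h where "h = (\<lambda>n. \<eta> /\<^sub>R real (Suc n))"
  define q where "q k = norm (f (x + k) - f x - f' k) / norm k" for k
  have "filterlim h (at 0) sequentially"
  proof (subst filterlim_at, intro conjI)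
    show "\<forall>\<^sub>F n in sequentially. h n \<in> UNIV \<and> h n \<noteq> 0"
      using False by (simp add: h_def)
    show "h \<longlonglongrightarrow> 0"
      using tendsto_scaleR[OF LIMSEQ_Suc[OF lim_inverse_n'] tendsto_const[of \<eta>]]
      by (simp add: h_def divide_inverse_commute)
  qed
  then have "(\<lambda>n. q (h n)) \<longlonglongrightarrow> 0"
    using deriv filterlim_compose by (auto simp: has_derivative_at q_def)
  moreover have "norm (real (Suc n) *\<^sub>R (f (x + h n) - f x) - f' \<eta>) = norm \<eta> * q (h n)" for n
  proof -
    have "real (Suc n) *\<^sub>R (f (x + h n) - f x) - f' \<eta> = real (Suc n) *\<^sub>R (f (x + h n) - f x - f' (h n))"
      by (simp add: h_def f'.scaleR scaleR_diff_right)
    then have "norm (real (Suc n) *\<^sub>R (f (x + h n) - f x) - f' \<eta>)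
        = real (Suc n) * norm (f (x + h n) - f x - f' (h n))"
      by (simp del: of_nat_Suc)
    also have "\<dots> = norm \<eta> * q (h n)"
      using False by (simp add: q_def h_def divide_inverse del: of_nat_Suc)
    finally show ?thesis .
  qed
  ultimately have "(\<lambda>n. norm (real (Suc n) *\<^sub>R (f (x + h n) - f x) - f' \<eta>)) \<longlonglongrightarrow> 0"
    using tendsto_mult_right_zero by auto
  then show ?thesis
    by (simp add: h_def tendsto_norm_zero_iff LIM_zero_iff)
qed

lemma borel_measurable_derivative:
  fixes N :: "'a \<Rightarrow> 'b::real_normed_vector \<Rightarrow> 'c::{real_normed_vector,second_countable_topology}"
  assumes meas: "\<And>\<theta>. (\<lambda>x. N x \<theta>) \<in> borel_measurable M"
    and deriv: "\<And>x \<theta>. (N x has_derivative N' x \<theta>) (at \<theta>)"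
  shows "(\<lambda>x. N' x \<theta> \<eta>) \<in> borel_measurable M"
proof (rule borel_measurable_LIMSEQ_metric)
  note meas [measurable]
  show "(\<lambda>x. real (Suc n) *\<^sub>R (N x (\<theta> + \<eta> /\<^sub>R real (Suc n)) - N x \<theta>)) \<in> borel_measurable M" for n
    by measurable
  show "(\<lambda>n. real (Suc n) *\<^sub>R (N x (\<theta> + \<eta> /\<^sub>R real (Suc n)) - N x \<theta>)) \<longlonglongrightarrow> N' x \<theta> \<eta>" for x
    using deriv by (rule has_derivative_difference_quotient_LIMSEQ)
qed

lemma has_derivative_remainder_bound:
  fixes f :: "'a::real_normed_vector \<Rightarrow> 'b::real_normed_vector"
  assumes deriv: "\<And>y. y \<in> closed_segment x (x + h) \<Longrightarrow> (f has_derivative f' y) (at y)"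
    and lip: "\<And>y. y \<in> closed_segment x (x + h) \<Longrightarrow> onorm (f' y - f' x) \<le> L * norm (y - x)"
  shows "norm (f (x + h) - f x - f' x h) \<le> L * (norm h)\<^sup>2"
proof (cases "h = 0")
  case True
  have "linear (f' x)"
    using deriv[of x] by (auto intro: has_derivative_linear)
  then show ?thesis
    using True by (simp add: linear_0)
next
  case False
  have lin: "bounded_linear (f' y - f' x)" if "y \<in> closed_segment x (x + h)" for y
    using bounded_linear_sub[OF has_derivative_bounded_linear[OF deriv[OF that]]
        has_derivative_bounded_linear[OF deriv[OF ends_in_segment(1)]]]
    by (simp add: fun_diff_def)
  have "0 \<le> L * norm h"
    using lip[of "x + h"] onorm_pos_le[OF lin[of "x + h"]] by simp
  then have "0 \<le> L"
    using False by (simp add: zero_le_mult_iff)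
  have "norm (f (x + h) - f x - f' x (x + h - x)) \<le> norm (x + h - x) * (L * norm h)"
  proof (rule differentiable_bound_linearization[where S = "closed_segment x (x + h)"])
    show "x + t *\<^sub>R (x + h - x) \<in> closed_segment x (x + h)" if "t \<in> {0..1}" for t
      using that by (auto simp: closed_segment_def algebra_simps intro!: exI[of _ t])
    show "(f has_derivative f' y) (at y within closed_segment x (x + h))"
      if "y \<in> closed_segment x (x + h)" for y
      using deriv[OF that] by (rule has_derivative_at_withinI)
    show "onorm (f' y - f' x) \<le> L * norm h" if "y \<in> closed_segment x (x + h)" for y
      using lip[OF that] segment_bound1[OF that] \<open>0 \<le> L\<close> by (simp add: order_trans mult_left_mono)
  qed simp
  then show ?thesis
    by (simp add: power2_eq_square mult_ac)
qed

lemma L2_adjoint_eqI: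
  assumes "\<And>\<eta>. g \<bullet> \<eta> = (\<integral>x. f x \<bullet> A x \<eta> \<partial>M)"
  shows "L2_adjoint M A f = g"
  unfolding L2_adjoint_def
proof (rule the_equality)
  show "\<forall>\<eta>. g \<bullet> \<eta> = (\<integral>x. f x \<bullet> A x \<eta> \<partial>M)"
    using assms by blast
  fix g' assume "\<forall>\<eta>. g' \<bullet> \<eta> = (\<integral>x. f x \<bullet> A x \<eta> \<partial>M)"
  then have "(g' - g) \<bullet> (g' - g) = 0"
    using assms by (simp add: inner_diff_left)
  then show "g' = g" by simp
qed

lemma integrable_inner_dominated:
  fixes A :: "'a \<Rightarrow> 'b::real_normed_vector \<Rightarrow> 'c::{real_inner,second_countable_topology}"
  assumes meas: "(\<lambda>x. A x \<eta>) \<in> borel_measurable M"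
    and K: "sq_int M K"
    and bound: "AE x in M. norm (A x \<eta>) \<le> K x * norm \<eta>"
    and f: "sq_int M f"
  shows "integrable M (\<lambda>x. f x \<bullet> A x \<eta>)"
  using f sq_int_dominated(1)[OF meas K bound] by (rule integrable_inner_sq_int)

lemma bounded_linear_integral_inner:
  fixes A :: "'a \<Rightarrow> 'b::real_normed_vector \<Rightarrow> 'c::{real_inner,second_countable_topology}"
  assumes lin: "\<And>x. bounded_linear (A x)"
    and meas: "\<And>\<eta>. (\<lambda>x. A x \<eta>) \<in> borel_measurable M"
    and K: "sq_int M K"
    and bound: "\<And>\<eta>. AE x in M. norm (A x \<eta>) \<le> K x * norm \<eta>"
    and f: "sq_int M f"
  shows "bounded_linear (\<lambda>\<eta>. \<integral>x. f x \<bullet> A x \<eta> \<partial>M)"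
proof (rule bounded_linear_intro[where K = "\<integral>x. norm (f x) * \<bar>K x\<bar> \<partial>M"])
  have integrable: "integrable M (\<lambda>x. f x \<bullet> A x \<eta>)" for \<eta>
    using meas K bound f by (rule integrable_inner_dominated)
  then show "(\<integral>x. f x \<bullet> A x (a + b) \<partial>M) = (\<integral>x. f x \<bullet> A x a \<partial>M) + (\<integral>x. f x \<bullet> A x b \<partial>M)" for a b
    by (simp add: linear_add[OF bounded_linear.linear[OF lin]] inner_add_right)
  show "(\<integral>x. f x \<bullet> A x (r *\<^sub>R a) \<partial>M) = r *\<^sub>R (\<integral>x. f x \<bullet> A x a \<partial>M)" for r a
    by (simp add: linear_scale[OF bounded_linear.linear[OF lin]])
  have "sq_int M (\<lambda>x. norm (f x))" "sq_int M (\<lambda>x. \<bar>K x\<bar>)"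
    using f K by (auto simp: sq_int_def)
  from integrable_inner_sq_int[OF this]
  have fK: "integrable M (\<lambda>x. norm (f x) * \<bar>K x\<bar>)"
    by simp
  fix \<eta>
  have "norm (\<integral>x. f x \<bullet> A x \<eta> \<partial>M) \<le> (\<integral>x. norm (f x \<bullet> A x \<eta>) \<partial>M)"
    by (rule integral_norm_bound)
  also have "\<dots> \<le> (\<integral>x. norm (f x) * \<bar>K x\<bar> * norm \<eta> \<partial>M)"
  proof (rule integral_mono_AE)
    show "AE x in M. norm (f x \<bullet> A x \<eta>) \<le> norm (f x) * \<bar>K x\<bar> * norm \<eta>"
      using bound[of \<eta>]
    proof eventually_elim
      case (elim x)
      have "norm (f x \<bullet> A x \<eta>) \<le> norm (f x) * norm (A x \<eta>)"
        by (simp add: Cauchy_Schwarz_ineq2)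
      also have "\<dots> \<le> norm (f x) * (\<bar>K x\<bar> * norm \<eta>)"
      proof (rule mult_left_mono)
        show "norm (A x \<eta>) \<le> \<bar>K x\<bar> * norm \<eta>"
          using elim mult_right_mono[OF abs_ge_self[of "K x"] norm_ge_zero[of \<eta>]] by linarith
      qed simp
      finally show ?case by (simp add: mult.assoc)
    qed
  qed (use integrable fK in auto)
  finally show "norm (\<integral>x. f x \<bullet> A x \<eta> \<partial>M) \<le> norm \<eta> * (\<integral>x. norm (f x) * \<bar>K x\<bar> \<partial>M)"
    by (simp add: mult.commute)
qed

lemma L2_adjoint_inner:
  fixes A :: "'a \<Rightarrow> 'b::{real_inner,complete_space} \<Rightarrow> 'c::{real_inner,second_countable_topology}"
  assumes lin: "\<And>x. bounded_linear (A x)"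
    and meas: "\<And>\<eta>. (\<lambda>x. A x \<eta>) \<in> borel_measurable M"
    and K: "sq_int M K"
    and bound: "\<And>\<eta>. AE x in M. norm (A x \<eta>) \<le> K x * norm \<eta>"
    and f: "sq_int M f"
  shows "L2_adjoint M A f \<bullet> \<eta> = (\<integral>x. f x \<bullet> A x \<eta> \<partial>M)"
proof -
  obtain g where g: "\<And>\<eta>. (\<integral>x. f x \<bullet> A x \<eta> \<partial>M) = g \<bullet> \<eta>"
    using riesz_representation[OF bounded_linear_integral_inner[OF assms]] by blast
  then have "L2_adjoint M A f = g"
    by (intro L2_adjoint_eqI) simp
  then show ?thesis
    using g by simp
qed

text \<open>No integrability hypothesis is needed: a non-integrable integrand has Bochner integral 0.\<close>

lemma integral_pair_inner_le:
  fixes a :: "'a \<Rightarrow> 'b::real_inner"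
  assumes "sigma_finite_measure M"
    and g: "\<And>\<eta>. g \<bullet> \<eta> = (\<integral>x. a x \<bullet> \<eta> \<partial>M)"
  shows "(\<integral>z. a (fst z) \<bullet> a (snd z) \<partial>(M \<Otimes>\<^sub>M M)) \<le> g \<bullet> g"
proof (cases "integrable (M \<Otimes>\<^sub>M M) (\<lambda>z. a (fst z) \<bullet> a (snd z))")
  case True
  interpret pair_sigma_finite M M
    using assms(1) by (simp add: pair_sigma_finite_def)
  have "(\<integral>z. a (fst z) \<bullet> a (snd z) \<partial>(M \<Otimes>\<^sub>M M)) = (\<integral>x. (\<integral>y. a x \<bullet> a y \<partial>M) \<partial>M)"
    using integral_fst'[OF True] by simp
  also have "\<dots> = (\<integral>x. g \<bullet> a x \<partial>M)"
  proof (rule Bochner_Integration.integral_cong[OF refl])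
    fix x
    have "(\<lambda>y. a x \<bullet> a y) = (\<lambda>y. a y \<bullet> a x)"
      by (simp add: inner_commute)
    then show "(\<integral>y. a x \<bullet> a y \<partial>M) = g \<bullet> a x"
      using g[of "a x"] by simp
  qed
  also have "\<dots> = g \<bullet> g"
  proof -
    have "(\<lambda>x. g \<bullet> a x) = (\<lambda>x. a x \<bullet> g)"
      by (simp add: inner_commute)
    then show ?thesis
      using g[of g] by simp
  qed
  finally show ?thesis by simp
next
  case False
  then show ?thesis
    by (simp add: not_integrable_integral_eq)
qed

lemma onorm_le_imp_norm_le:
  assumes "bounded_linear f" "onorm f \<le> c"
  shows "norm (f x) \<le> c * norm x"
  using onorm[OF assms(1), of x] mult_right_mono[OF assms(2) norm_ge_zero[of x]] by linarith

lemma L2norm_remainder_le: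
  fixes N :: "'a \<Rightarrow> 'b::real_normed_vector \<Rightarrow> 'c::{real_normed_vector,second_countable_topology}"
  assumes segment: "closed_segment \<theta> (\<theta> + h) \<subseteq> D"
    and meas: "\<And>\<theta>. (\<lambda>x. N x \<theta>) \<in> borel_measurable M"
    and deriv: "\<And>x \<theta>. (N x has_derivative N' x \<theta>) (at \<theta>)"
    and L: "sq_int M L"
    and lip: "AE x in M. \<forall>\<theta>1\<in>D. \<forall>\<theta>2\<in>D. onorm (\<lambda>\<eta>. N' x \<theta>1 \<eta> - N' x \<theta>2 \<eta>) \<le> L x * norm (\<theta>1 - \<theta>2)"
  shows "L2norm M (\<lambda>x. N x (\<theta> + h) - N x \<theta> - N' x \<theta> h) \<le> L2norm M L * (norm h)\<^sup>2"
proof -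
  have "(\<lambda>x. N x (\<theta> + h) - N x \<theta> - N' x \<theta> h) \<in> borel_measurable M"
    by (intro borel_measurable_diff meas borel_measurable_derivative[OF meas deriv])
  moreover have "AE x in M. norm (N x (\<theta> + h) - N x \<theta> - N' x \<theta> h) \<le> L x * (norm h)\<^sup>2"
    using lip
  proof eventually_elim
    case (elim x)
    show ?case
    proof (rule has_derivative_remainder_bound[OF deriv])
      show "onorm (N' x y - N' x \<theta>) \<le> L x * norm (y - \<theta>)"
        if "y \<in> closed_segment \<theta> (\<theta> + h)" for y
        using elim segment that by (auto simp: fun_diff_def)
    qed
  qed
  ultimately have "L2norm M (\<lambda>x. N x (\<theta> + h) - N x \<theta> - N' x \<theta> h) \<le> L2norm M L * \<bar>(norm h)\<^sup>2\<bar>"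
    by (rule sq_int_dominated(2)[OF _ L])
  then show ?thesis
    by simp
qed

lemma L2norm_remainder_tendsto_zero:
  fixes N :: "'a \<Rightarrow> 'b::real_normed_vector \<Rightarrow> 'c::{real_normed_vector,second_countable_topology}"
  assumes "open D" "\<theta> \<in> D"
    and meas: "\<And>\<theta>. (\<lambda>x. N x \<theta>) \<in> borel_measurable M"
    and deriv: "\<And>x \<theta>. (N x has_derivative N' x \<theta>) (at \<theta>)"
    and L: "sq_int M L"
    and lip: "AE x in M. \<forall>\<theta>1\<in>D. \<forall>\<theta>2\<in>D. onorm (\<lambda>\<eta>. N' x \<theta>1 \<eta> - N' x \<theta>2 \<eta>) \<le> L x * norm (\<theta>1 - \<theta>2)"
  shows "((\<lambda>h. L2norm M (\<lambda>x. N x (\<theta> + h) - N x \<theta> - N' x \<theta> h) / norm h) \<longlongrightarrow> 0) (at 0)"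
proof -
  obtain r where "r > 0" and ball: "ball \<theta> r \<subseteq> D"
    using assms(1,2) open_contains_ball by blast
  have "closed_segment \<theta> (\<theta> + h) \<subseteq> D" if "norm h < r" for h
  proof -
    have "closed_segment \<theta> (\<theta> + h) \<subseteq> ball \<theta> r"
      using that \<open>r > 0\<close> by (intro closed_segment_subset) (auto simp: dist_norm)
    then show ?thesis
      using ball by blast
  qed
  note remainder = L2norm_remainder_le[OF this meas deriv L lip]
  have "\<forall>\<^sub>F h in at 0. h \<noteq> 0 \<and> norm h < r"
    using \<open>r > 0\<close> by (auto simp: eventually_at dist_norm intro!: exI[of _ r])
  then have "\<forall>\<^sub>F h in at 0. norm (L2norm M (\<lambda>x. N x (\<theta> + h) - N x \<theta> - N' x \<theta> h) / norm h)
      \<le> L2norm M L * norm h"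
  proof eventually_elim
    case (elim h)
    then show ?case
      using remainder[of h] by (simp add: L2norm_nonneg divide_le_eq power2_eq_square mult.assoc)
  qed
  moreover have "((\<lambda>h. L2norm M L * norm h) \<longlongrightarrow> 0) (at (0::'b))"
    by (intro tendsto_mult_right_zero tendsto_norm_zero tendsto_ident_at)
  ultimately show ?thesis
    by (rule Lim_null_comparison)
qed

theorem lemma3:
  fixes M :: "'a measure"
    and N :: "'a \<Rightarrow> 'b::{real_inner, complete_space} \<Rightarrow> real ^ 'l::finite"
    and N' :: "'a \<Rightarrow> 'b \<Rightarrow> 'b \<Rightarrow> real ^ 'l"
    and D :: "'b set"
    and K L :: "'a \<Rightarrow> real"
  assumes prob: "prob_space M"
    and openD: "open D"
    and meas: "\<And>\<theta>. (\<lambda>x. N x \<theta>) \<in> borel_measurable M"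
    and deriv: "\<And>x \<theta>. (N x has_derivative N' x \<theta>) (at \<theta>)"
    and sqint: "\<And>\<theta>. integrable M (\<lambda>x. (norm (N x \<theta>))\<^sup>2)"
    and K_L2: "sq_int M K"
    and L_L2: "sq_int M L"
    and bounds: "AE x in M.
        (\<forall>\<theta>\<in>D. onorm (N' x \<theta>) \<le> K x) \<and>
        (\<forall>\<theta>1\<in>D. \<forall>\<theta>2\<in>D. onorm (\<lambda>\<eta>. N' x \<theta>1 \<eta> - N' x \<theta>2 \<eta>) \<le> L x * norm (\<theta>1 - \<theta>2))"
  shows
    \<comment> \<open>Frechet differentiability of N_mu on D with derivative eta |-> N'(.,theta) eta into L^2\<close>
    "(\<forall>\<theta>\<in>D.
        (\<forall>\<eta>. sq_int M (\<lambda>x. N' x \<theta> \<eta>)) \<and>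
        ((\<lambda>h. L2norm M (\<lambda>x. N x (\<theta> + h) - N x \<theta> - N' x \<theta> h) / norm h) \<longlongrightarrow> 0) (at 0))
     \<comment> \<open>adjoint formula (integral in the weak/Pettis sense)\<close>
   \<and> (\<forall>\<theta>\<in>D. \<forall>f. sq_int M f \<longrightarrow>
        (\<forall>\<eta>. L2_adjoint M (\<lambda>x. N' x \<theta>) f \<bullet> \<eta> = (\<integral>x. f x \<bullet> N' x \<theta> \<eta> \<partial>M)) \<and>
        (\<forall>\<eta>. integrable M (\<lambda>x. adjoint (N' x \<theta>) (f x) \<bullet> \<eta>) \<and>
              L2_adjoint M (\<lambda>x. N' x \<theta>) f \<bullet> \<eta> = (\<integral>x. adjoint (N' x \<theta>) (f x) \<bullet> \<eta> \<partial>M)))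
     \<comment> \<open>BJ with constant ||K||_{L^2}\<close>
   \<and> (\<forall>\<theta>\<in>D. \<forall>\<eta>. L2norm M (\<lambda>x. N' x \<theta> \<eta>) \<le> L2norm M K * norm \<eta>)
     \<comment> \<open>LJ with constant ||L||_{L^2}\<close>
   \<and> (\<forall>\<theta>1\<in>D. \<forall>\<theta>2\<in>D. \<forall>\<eta>.
        L2norm M (\<lambda>x. N' x \<theta>1 \<eta> - N' x \<theta>2 \<eta>) \<le> L2norm M L * norm (\<theta>1 - \<theta>2) * norm \<eta>)
     \<comment> \<open>UC\<close>
   \<and> (\<forall>lam>0.
        (\<forall>\<theta>\<in>D. \<forall>f. sq_int M f \<longrightarrow>
           (\<integral>z. adjoint (N' (fst z) \<theta>) (f (fst z)) \<bullet> adjoint (N' (snd z) \<theta>) (f (snd z)) \<partial>(M \<Otimes>\<^sub>M M))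
             \<ge> lam * (L2norm M f)\<^sup>2)
        \<longrightarrow> (\<forall>\<theta>\<in>D. \<forall>f. sq_int M f \<longrightarrow>
           (\<integral>x. f x \<bullet> N' x \<theta> (L2_adjoint M (\<lambda>x. N' x \<theta>) f) \<partial>M) \<ge> lam * (L2norm M f)\<^sup>2))"
proof -
  interpret prob_space M by (rule prob)
  have lin: "\<And>x \<theta>. bounded_linear (N' x \<theta>)"
    using deriv by (rule has_derivative_bounded_linear)
  have N'_meas: "\<And>\<theta> \<eta>. (\<lambda>x. N' x \<theta> \<eta>) \<in> borel_measurable M"
    using meas deriv by (rule borel_measurable_derivative)
  have K_bound: "AE x in M. norm (N' x \<theta> \<eta>) \<le> K x * norm \<eta>" if "\<theta> \<in> D" for \<theta> \<eta>
    using bounds by eventually_elim (use that in \<open>blast intro: onorm_le_imp_norm_le[OF lin]\<close>)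
  have L_lipschitz: "AE x in M. \<forall>\<theta>1\<in>D. \<forall>\<theta>2\<in>D.
      onorm (\<lambda>\<eta>. N' x \<theta>1 \<eta> - N' x \<theta>2 \<eta>) \<le> L x * norm (\<theta>1 - \<theta>2)"
    using bounds by simp
  have L_bound: "AE x in M. norm (N' x \<theta>1 \<eta> - N' x \<theta>2 \<eta>) \<le> L x * norm (\<theta>1 - \<theta>2) * norm \<eta>"
    if "\<theta>1 \<in> D" "\<theta>2 \<in> D" for \<theta>1 \<theta>2 \<eta>
    using L_lipschitz
    by eventually_elim (use that in \<open>auto intro!: onorm_le_imp_norm_le bounded_linear_sub lin\<close>)
  have adjoint_eq: "adjoint (N' x \<theta>) (f x) \<bullet> \<eta> = f x \<bullet> N' x \<theta> \<eta>" for x \<theta> f \<eta>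
    using adjoint_works_hilbert[OF lin] by (metis inner_commute)
  have adjoint_inner: "L2_adjoint M (\<lambda>x. N' x \<theta>) f \<bullet> \<eta> = (\<integral>x. f x \<bullet> N' x \<theta> \<eta> \<partial>M)"
      "integrable M (\<lambda>x. f x \<bullet> N' x \<theta> \<eta>)" if "\<theta> \<in> D" "sq_int M f" for \<theta> f \<eta>
    using L2_adjoint_inner[OF lin N'_meas K_L2 K_bound[OF that(1)] that(2)]
      integrable_inner_dominated[where A = "\<lambda>x. N' x \<theta>", OF N'_meas K_L2 K_bound[OF that(1)] that(2)]
    by auto
  have coercive: "(\<integral>x. f x \<bullet> N' x \<theta> (L2_adjoint M (\<lambda>x. N' x \<theta>) f) \<partial>M) \<ge> lam * (L2norm M f)\<^sup>2"
    if "\<theta> \<in> D" "sq_int M f"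
      and "(\<integral>z. adjoint (N' (fst z) \<theta>) (f (fst z)) \<bullet> adjoint (N' (snd z) \<theta>) (f (snd z)) \<partial>(M \<Otimes>\<^sub>M M))
             \<ge> lam * (L2norm M f)\<^sup>2" for lam \<theta> f
    using integral_pair_inner_le[OF sigma_finite_measure_axioms, of "L2_adjoint M (\<lambda>x. N' x \<theta>) f"
        "\<lambda>x. adjoint (N' x \<theta>) (f x)"] adjoint_inner(1)[OF that(1,2)] that(3)
    by (simp add: adjoint_eq)
  show ?thesis
    using sq_int_dominated[OF N'_meas K_L2 K_bound]
      sq_int_dominated(2)[OF borel_measurable_diff[OF N'_meas N'_meas] L_L2 L_bound[unfolded mult.assoc]]
      L2norm_remainder_tendsto_zero[OF openD _ meas deriv L_L2 L_lipschitz]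
      adjoint_inner coercive by (auto simp: adjoint_eq mult.assoc)
qed

end
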